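(* Let $G=(V,E)$ be a graph, let $r\ge1$ be an integer, and let $k=\mathrm{adm}_r(G)$. If $\sigma$ is a total order on $V$ such that $\mathrm{est}_r(u,G_\sigma)\le k$ for all $u\in V$, then for every $u\in V$, \[ \sum_{v\in \mathrm{reach}_r(u,G_\sigma)} (k-1)^{r-d_v} \le k\cdot (k-1)^{r-1}, \] where $d_v=d_v(u,G_\sigma)$.
   Context: For a graph $G$ and a total order $\sigma$ of $V$, a $u$–$v$ path $P$ with $v\ne u$ is $\ell$-qualifying if it has length at most $\ell$, $u<_\sigma v$, and every vertex of $P$ other than $u,v$ precedes $u$ in $\sigma$. $\mathrm{reach}_r(u,G_\sigma)$ is the set of vertices $v$ for which an $r$-qualifying $u$–$v$ path exists, and $d_v(u,G_\sigma)$ is the minimum $i$ such that $v\in\mathrm{reach}_i(u,G_\sigma)$. An $\ell$-qualifying $u$–$v$ path is shortest if no $(\ell-1)$-qualifying $u$–$v$ path exists. The $r$-backconnectivity $\mathrm{bcon}_r(u,G_\sigma)$ is the maximum number of $r$-qualifying paths starting at $u$ that are pairwise vertex-disjoint apart from $u$; the estimated $r$-backconnectivity $\mathrm{est}_r(u,G_\sigma)$ is the maximum number of shortest $r$-qualifying paths starting at $u$ that are pairwise vertex-disjoint apart from $u$. The $r$-admissibility is $\mathrm{adm}_r(G)=\min_\sigma\max_{u}\mathrm{bcon}_r(u,G_\sigma)$ over all total orders $\sigma$ of $V$. *)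

theory Defs
  imports Main
begin

definition simple_graph :: "'a set \<Rightarrow> ('a \<Rightarrow> 'a \<Rightarrow> bool) \<Rightarrow> bool" where
  "simple_graph V E \<longleftrightarrow> finite V \<and> (\<forall>x y. E x y \<longrightarrow> x \<in> V \<and> y \<in> V)
     \<and> (\<forall>x y. E x y \<longrightarrow> E y x) \<and> (\<forall>x. \<not> E x x)"

(* A total order sigma of V, given as a strict linear order relation on V:
   (x,y) \<in> \<sigma> means x <_\<sigma> y. *)
definition total_order_on :: "'a set \<Rightarrow> ('a \<times> 'a) set \<Rightarrow> bool" where
  "total_order_on V \<sigma> \<longleftrightarrow> strict_linear_order_on V \<sigma> \<and> \<sigma> \<subseteq> V \<times> V"

definition is_path :: "'a set \<Rightarrow> ('a \<Rightarrow> 'a \<Rightarrow> bool) \<Rightarrow> 'a list \<Rightarrow> bool" where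
  "is_path V E p \<longleftrightarrow> p \<noteq> [] \<and> distinct p \<and> set p \<subseteq> V
     \<and> (\<forall>i. Suc i < length p \<longrightarrow> E (p ! i) (p ! Suc i))"

definition path_len :: "'a list \<Rightarrow> nat" where
  "path_len p = length p - 1"

definition qualifying ::
  "'a set \<Rightarrow> ('a \<Rightarrow> 'a \<Rightarrow> bool) \<Rightarrow> ('a \<times> 'a) set \<Rightarrow> nat \<Rightarrow> 'a \<Rightarrow> 'a \<Rightarrow> 'a list \<Rightarrow> bool" where
  "qualifying V E \<sigma> l u v p \<longleftrightarrow> is_path V E p \<and> hd p = u \<and> last p = v \<and> v \<noteq> u
     \<and> path_len p \<le> l \<and> (u, v) \<in> \<sigma>
     \<and> (\<forall>w \<in> set p. w \<noteq> u \<and> w \<noteq> v \<longrightarrow> (w, u) \<in> \<sigma>)"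

definition reach :: "'a set \<Rightarrow> ('a \<Rightarrow> 'a \<Rightarrow> bool) \<Rightarrow> ('a \<times> 'a) set \<Rightarrow> nat \<Rightarrow> 'a \<Rightarrow> 'a set" where
  "reach V E \<sigma> r u = {v. \<exists>p. qualifying V E \<sigma> r u v p}"

definition dist_reach :: "'a set \<Rightarrow> ('a \<Rightarrow> 'a \<Rightarrow> bool) \<Rightarrow> ('a \<times> 'a) set \<Rightarrow> 'a \<Rightarrow> 'a \<Rightarrow> nat" where
  "dist_reach V E \<sigma> u v = (LEAST i. v \<in> reach V E \<sigma> i u)"

definition shortest_qualifying ::
  "'a set \<Rightarrow> ('a \<Rightarrow> 'a \<Rightarrow> bool) \<Rightarrow> ('a \<times> 'a) set \<Rightarrow> nat \<Rightarrow> 'a \<Rightarrow> 'a \<Rightarrow> 'a list \<Rightarrow> bool" where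
  "shortest_qualifying V E \<sigma> l u v p \<longleftrightarrow> qualifying V E \<sigma> l u v p
     \<and> \<not> (\<exists>q. qualifying V E \<sigma> (l - 1) u v q)"

definition disjoint_at :: "'a \<Rightarrow> 'a list set \<Rightarrow> bool" where
  "disjoint_at u P \<longleftrightarrow> (\<forall>p \<in> P. \<forall>q \<in> P. p \<noteq> q \<longrightarrow> set p \<inter> set q = {u})"

definition bcon :: "'a set \<Rightarrow> ('a \<Rightarrow> 'a \<Rightarrow> bool) \<Rightarrow> ('a \<times> 'a) set \<Rightarrow> nat \<Rightarrow> 'a \<Rightarrow> nat" where
  "bcon V E \<sigma> r u = Max {card P | P. disjoint_at u P
      \<and> (\<forall>p \<in> P. \<exists>v. qualifying V E \<sigma> r u v p)}"

definition est :: "'a set \<Rightarrow> ('a \<Rightarrow> 'a \<Rightarrow> bool) \<Rightarrow> ('a \<times> 'a) set \<Rightarrow> nat \<Rightarrow> 'a \<Rightarrow> nat" where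
  "est V E \<sigma> r u = Max {card P | P. disjoint_at u P
      \<and> (\<forall>p \<in> P. \<exists>v. qualifying V E \<sigma> r u v p \<and> shortest_qualifying V E \<sigma> (path_len p) u v p)}"

definition adm :: "'a set \<Rightarrow> ('a \<Rightarrow> 'a \<Rightarrow> bool) \<Rightarrow> nat \<Rightarrow> nat" where
  "adm V E r = Min {Max ((\<lambda>u. bcon V E \<sigma> r u) ` V) | \<sigma>. total_order_on V \<sigma>}"

end

(*
  Fix u and let the depth of a vertex be the length of a shortest walk from u whose vertices,
  except possibly the last, are not after u in sigma; for v after u this depth is d_v, and
  reach_r(u) consists of the vertices after u of depth at most r.  Give every v in reach_r(u)
  the weight (k-1)^(r-d_v), and to a vertex x the total weight of the vertices of reach_r(u)
  that can be reached from x by edges going one layer deeper in this breadth-first search.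

  For x before u, apply Menger's theorem to the layer-increasing edges leaving vertices before x,
  from the successors of x to the vertices after x.  Disjoint paths there, prefixed by x, are
  shortest qualifying paths from x; the shortest walk from u to x, followed backwards to its
  last vertex after x, is one more, disjoint from them because it stays in lower layers.  Since
  est_r(x) <= k, some fewer than k deeper vertices separate, and they cover everything below x.
  By induction on r - d_x the weight of x is at most (k-1)^(r-d_x).  At u the separator has at
  most k vertices, each covered by a vertex of depth 1, which gives k (k-1)^(r-1).
*)

theory Submission
  imports Defs "HOL-Library.Disjoint_Sets"
begin

lemma successively_distinct_subwalk:
  assumes "successively R w" "w \<noteq> []"
  shows "\<exists>p. p \<noteq> [] \<and> distinct p \<and> successively R p \<and> hd p = hd w \<and> last p = last w
           \<and> set p \<subseteq> set w \<and> length p \<le> length w"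
  using assms
proof (induction "length w" arbitrary: w rule: less_induct)
  case less
  show ?case
  proof (cases "distinct w")
    case False
    then obtain xs ys zs y where w: "w = xs @ [y] @ ys @ [y] @ zs"
      using not_distinct_decomp by blast
    define w' where "w' = xs @ [y] @ zs"
    have "successively R w'"
      using less.prems(1) unfolding w w'_def by (auto simp: successively_append_iff successively_Cons)
    moreover have "length w' < length w" "w' \<noteq> []" unfolding w w'_def by simp_all
    moreover have "hd w' = hd w" unfolding w w'_def by (cases xs) auto
    moreover have "last w' = last w" unfolding w w'_def by (cases zs) auto
    moreover have "set w' \<subseteq> set w" unfolding w w'_def by auto
    ultimately show ?thesis using less.hyps[of w'] by fastforce
  qed (use less.prems in blast)
qed

lemma successively_mono_adjacent:
  assumes "successively P xs" "\<And>ys a b zs. xs = ys @ a # b # zs \<Longrightarrow> P a b \<Longrightarrow> Q a b"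
  shows "successively Q xs"
  using assms
proof (induction xs)
  case (Cons a xs)
  show ?case
  proof (cases xs)
    case (Cons b zs)
    have "Q a b" using Cons.prems(2)[of "[]"] Cons.prems(1) \<open>xs = b # zs\<close> by simp
    moreover have "successively Q xs"
    proof (rule Cons.IH)
      show "successively P xs" using Cons.prems(1) \<open>xs = b # zs\<close> by simp
      fix ys c d zs' assume "xs = ys @ c # d # zs'" "P c d"
      then show "Q c d" using Cons.prems(2)[of "a # ys"] by simp
    qed
    ultimately show ?thesis using \<open>xs = b # zs\<close> by simp
  qed simp
qed simp

lemma set_eq_insert_last_butlast: "xs \<noteq> [] \<Longrightarrow> set xs = insert (last xs) (set (butlast xs))"
  by (cases xs rule: rev_cases) auto

lemma successively_predecessor: "successively R xs \<Longrightarrow> z \<in> set (tl xs) \<Longrightarrow> \<exists>a. R a z"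
proof (induction xs)
  case (Cons x xs)
  then show ?case by (cases xs) (auto simp: successively_Cons)
qed simp

lemma successively_successor: "successively R xs \<Longrightarrow> z \<in> set (butlast xs) \<Longrightarrow> \<exists>b. R z b"
proof (induction xs)
  case (Cons x xs)
  then show ?case by (cases xs) (auto simp: successively_Cons)
qed simp

section \<open>Menger's theorem for finite digraphs\<close>

definition dipath :: "('a \<times> 'a) set \<Rightarrow> 'a list \<Rightarrow> bool" where
  "dipath Ed p \<longleftrightarrow> p \<noteq> [] \<and> distinct p \<and> successively (\<lambda>a b. (a, b) \<in> Ed) p"

definition dipath_from_to :: "('a \<times> 'a) set \<Rightarrow> 'a set \<Rightarrow> 'a set \<Rightarrow> 'a list \<Rightarrow> bool" where
  "dipath_from_to Ed A B p \<longleftrightarrow> dipath Ed p \<and> hd p \<in> A \<and> last p \<in> B"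

definition separates :: "('a \<times> 'a) set \<Rightarrow> 'a set \<Rightarrow> 'a set \<Rightarrow> 'a set \<Rightarrow> bool" where
  "separates Ed A B S \<longleftrightarrow> (\<forall>p. dipath_from_to Ed A B p \<longrightarrow> set p \<inter> S \<noteq> {})"

lemma dipath_mono: "dipath Ed p \<Longrightarrow> Ed \<subseteq> Ed' \<Longrightarrow> dipath Ed' p"
  unfolding dipath_def by (auto elim: successively_mono)

lemma dipath_append_iff:
  "dipath Ed (p @ z # q) \<longleftrightarrow> dipath Ed (p @ [z]) \<and> dipath Ed (z # q) \<and> set p \<inter> set (z # q) = {}"
  unfolding dipath_def by (auto simp: successively_append_iff successively_Cons)

lemma dipath_from_to_first_hit:
  assumes "dipath_from_to Ed A B p" "set p \<inter> X \<noteq> {}"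
  obtains p1 z p2 where "p = p1 @ z # p2" "z \<in> X" "set p1 \<inter> X = {}"
    "dipath_from_to Ed A X (p1 @ [z])"
proof -
  obtain p1 z p2 where p: "p = p1 @ z # p2" "z \<in> X" "\<forall>w\<in>set p1. w \<notin> X"
    using split_list_first_prop[of p "\<lambda>w. w \<in> X"] assms(2) by blast
  then have "dipath_from_to Ed A X (p1 @ [z])"
    using assms(1) dipath_append_iff[of Ed p1 z p2] unfolding dipath_from_to_def by (cases p1) auto
  with p that show ?thesis by blast
qed

lemma dipath_from_to_last_hit:
  assumes "dipath_from_to Ed A B p" "set p \<inter> X \<noteq> {}"
  obtains p1 z p2 where "p = p1 @ z # p2" "z \<in> X" "set p2 \<inter> X = {}"
    "dipath_from_to Ed X B (z # p2)"
proof -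
  obtain p1 z p2 where p: "p = p1 @ z # p2" "z \<in> X" "\<forall>w\<in>set p2. w \<notin> X"
    using split_list_last_prop[of p "\<lambda>w. w \<in> X"] assms(2) by blast
  then have "dipath_from_to Ed X B (z # p2)"
    using assms(1) dipath_append_iff[of Ed p1 z p2] unfolding dipath_from_to_def by (cases p2) auto
  with p that show ?thesis by blast
qed

text \<open>The part of an \<open>A\<close>--\<open>B\<close> path up to its first vertex in \<open>X\<close> avoids the tails of
  the deleted edges, so it survives in \<open>Ed'\<close>.\<close>

lemma separates_via_tails:
  assumes "separates Ed A B X" "Ed' \<subseteq> Ed" "\<And>a b. (a, b) \<in> Ed - Ed' \<Longrightarrow> a \<in> X"
    and "separates Ed' A X T"
  shows "separates Ed A B T"
  unfolding separates_def
proof (intro allI impI)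
  fix p assume p: "dipath_from_to Ed A B p"
  then obtain p1 z p2 where sp: "p = p1 @ z # p2" "set p1 \<inter> X = {}"
    "dipath_from_to Ed A X (p1 @ [z])"
    using assms(1) dipath_from_to_first_hit unfolding separates_def by metis
  have "successively (\<lambda>a b. (a, b) \<in> Ed') (p1 @ [z])"
  proof (rule successively_mono_adjacent)
    show "successively (\<lambda>a b. (a, b) \<in> Ed) (p1 @ [z])"
      using sp(3) unfolding dipath_from_to_def dipath_def by blast
    fix ys a b zs assume "p1 @ [z] = ys @ a # b # zs" "(a, b) \<in> Ed"
    moreover from this(1) have "p1 = butlast (ys @ a # b # zs)" by (metis butlast_snoc)
    then have "a \<in> set p1" by (simp add: butlast_append)
    ultimately show "(a, b) \<in> Ed'" using assms(3) sp(2) by auto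
  qed
  then have "dipath_from_to Ed' A X (p1 @ [z])"
    using sp(3) unfolding dipath_from_to_def dipath_def by blast
  then have "set (p1 @ [z]) \<inter> T \<noteq> {}" using assms(4) unfolding separates_def by blast
  then show "set p \<inter> T \<noteq> {}" using sp(1) by auto
qed

lemma separates_via_heads:
  assumes "separates Ed A B Y" "Ed' \<subseteq> Ed" "\<And>a b. (a, b) \<in> Ed - Ed' \<Longrightarrow> b \<in> Y"
    and "separates Ed' Y B T"
  shows "separates Ed A B T"
  unfolding separates_def
proof (intro allI impI)
  fix p assume p: "dipath_from_to Ed A B p"
  then obtain p1 z p2 where sp: "p = p1 @ z # p2" "set p2 \<inter> Y = {}"
    "dipath_from_to Ed Y B (z # p2)"
    using assms(1) dipath_from_to_last_hit unfolding separates_def by metis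
  have "successively (\<lambda>a b. (a, b) \<in> Ed') (z # p2)"
  proof (rule successively_mono_adjacent)
    show "successively (\<lambda>a b. (a, b) \<in> Ed) (z # p2)"
      using sp(3) unfolding dipath_from_to_def dipath_def by blast
    fix ys a b zs assume "z # p2 = ys @ a # b # zs" "(a, b) \<in> Ed"
    moreover from this have "b \<in> set p2" by (cases ys) auto
    ultimately show "(a, b) \<in> Ed'" using assms(3) sp(2) by blast
  qed
  then have "dipath_from_to Ed' Y B (z # p2)"
    using sp(3) unfolding dipath_from_to_def dipath_def by blast
  then have "set (z # p2) \<inter> T \<noteq> {}" using assms(4) unfolding separates_def by blast
  then show "set p \<inter> T \<noteq> {}" using sp(1) by auto
qed

lemma obtain_disjoint_paths_by_endpoint:
  assumes "finite X" "card P = card X" "disjoint_family_on set P"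
    and "\<And>p. p \<in> P \<Longrightarrow> \<exists>p'. Q p' \<and> set p' \<subseteq> set p \<and> ep p' \<in> X \<and> ep p' \<in> set p'"
  obtains f where "\<And>a. a \<in> X \<Longrightarrow> Q (f a) \<and> ep (f a) = a"
    "disjoint_family_on (\<lambda>a. set (f a)) X"
proof -
  define trim where "trim p = (SOME p'. Q p' \<and> set p' \<subseteq> set p \<and> ep p' \<in> X \<and> ep p' \<in> set p')" for p
  have trim: "Q (trim p) \<and> set (trim p) \<subseteq> set p \<and> ep (trim p) \<in> X \<and> ep (trim p) \<in> set (trim p)"
    if "p \<in> P" for p
    unfolding trim_def by (rule someI_ex) (use assms(4) that in blast)
  define g where "g p = ep (trim p)" for p
  have "inj_on g P"
  proof (rule inj_onI)
    fix p q assume pq: "p \<in> P" "q \<in> P" "g p = g q"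
    then have "g p \<in> set p \<inter> set q" using trim[OF pq(1)] trim[OF pq(2)] unfolding g_def by auto
    then show "p = q" using assms(3) pq unfolding disjoint_family_on_def by blast
  qed
  have gP: "g ` P \<subseteq> X" using trim unfolding g_def by auto
  have "finite P"
  proof (cases "X = {}")
    case True then show ?thesis using gP by auto
  next
    case False then show ?thesis using assms(1,2) by (metis card.infinite card_0_eq)
  qed
  then have "card (g ` P) = card X" using card_image[OF \<open>inj_on g P\<close>] assms(2) by simp
  then have g_onto: "g ` P = X" using gP assms(1) by (simp add: card_subset_eq)
  define f where "f a = trim (inv_into P g a)" for a
  have inv: "inv_into P g a \<in> P" "g (inv_into P g a) = a" if "a \<in> X" for a
    using that g_onto by (auto intro: inv_into_into f_inv_into_f)
  show thesis
  proof
    show "Q (f a) \<and> ep (f a) = a" if "a \<in> X" for a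
      using trim inv[OF that] unfolding f_def g_def by metis
    show "disjoint_family_on (\<lambda>a. set (f a)) X"
      unfolding disjoint_family_on_def
    proof (intro ballI impI)
      fix a b assume ab: "a \<in> X" "b \<in> X" "a \<noteq> b"
      then have "inv_into P g a \<noteq> inv_into P g b" using inv by metis
      then have "set (inv_into P g a) \<inter> set (inv_into P g b) = {}"
        using assms(3) inv ab unfolding disjoint_family_on_def by blast
      then show "set (f a) \<inter> set (f b) = {}" using trim inv ab unfolding f_def by blast
    qed
  qed
qed

lemma crossing_points_in_separator:
  assumes S: "separates Ed A B S" "S \<subseteq> X" "S \<subseteq> Y"
    and p: "dipath_from_to Ed A {a} p" "set (butlast p) \<inter> X = {}"
    and q: "dipath_from_to Ed {b} B q" "set (tl q) \<inter> Y = {}"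
  shows "set p \<inter> set q \<subseteq> S \<inter> {a} \<inter> {b}"
proof
  fix z assume "z \<in> set p \<inter> set q"
  then have z: "z \<in> set p" "z \<in> set q" by auto
  have "z \<in> S"
  proof (rule ccontr)
    assume "z \<notin> S"
    obtain p1 p2 where p12: "p = p1 @ z # p2" using z(1) split_list by metis
    obtain q1 q2 where q12: "q = q1 @ z # q2" using z(2) split_list by metis
    define w where "w = p1 @ z # q2"
    have "dipath Ed (p1 @ [z])"
      using p(1) dipath_append_iff[of Ed p1 z p2] unfolding p12 dipath_from_to_def by blast
    moreover have "dipath Ed (z # q2)"
      using q(1) dipath_append_iff[of Ed q1 z q2] unfolding q12 dipath_from_to_def by blast
    ultimately have "successively (\<lambda>a b. (a, b) \<in> Ed) w"
      unfolding w_def dipath_def by (auto simp: successively_append_iff)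
    then obtain w' where w': "w' \<noteq> []" "distinct w'" "successively (\<lambda>a b. (a, b) \<in> Ed) w'"
      "hd w' = hd w" "last w' = last w" "set w' \<subseteq> set w"
      using successively_distinct_subwalk[of _ w] w_def by blast
    have "hd w = hd p" unfolding w_def p12 by (cases p1) simp_all
    moreover have "last w = last q" unfolding w_def q12 by simp
    ultimately have "dipath_from_to Ed A B w'"
      using w' p(1) q(1) unfolding dipath_from_to_def dipath_def by simp
    moreover have "set w \<inter> S = {}"
    proof -
      have "set p1 \<subseteq> set (butlast p)" unfolding p12 by (simp add: butlast_append)
      moreover have "set q2 \<subseteq> set (tl q)" unfolding q12 by (cases q1) auto
      ultimately show ?thesis using p(2) q(2) S(2,3) \<open>z \<notin> S\<close> unfolding w_def by auto
    qed
    ultimately show False using w'(6) S(1) unfolding separates_def by blast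
  qed
  moreover have "p \<noteq> []" "q \<noteq> []" using p(1) q(1) unfolding dipath_from_to_def dipath_def by auto
  then have "set p = insert (last p) (set (butlast p))" "set q = insert (hd q) (set (tl q))"
    using set_eq_insert_last_butlast by (blast, cases q, auto)
  ultimately show "z \<in> S \<inter> {a} \<inter> {b}"
    using z p q S(2,3) unfolding dipath_from_to_def by blast
qed

lemma separates_delete_edge:
  assumes "separates (Ed - {(x, y)}) A B S"
  shows "separates Ed A B (insert x S)" "separates Ed A B (insert y S)"
proof -
  have "x \<in> set p \<and> y \<in> set p" if p: "dipath_from_to Ed A B p" "set p \<inter> S = {}" for p
  proof (rule ccontr)
    assume xy: "\<not> (x \<in> set p \<and> y \<in> set p)"
    have "successively (\<lambda>a b. (a, b) \<in> Ed - {(x, y)}) p"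
    proof (rule successively_mono_adjacent)
      show "successively (\<lambda>a b. (a, b) \<in> Ed) p" using p(1) unfolding dipath_from_to_def dipath_def by blast
    qed (use xy in auto)
    then have "dipath_from_to (Ed - {(x, y)}) A B p" using p(1) unfolding dipath_from_to_def dipath_def by blast
    then show False using assms p(2) unfolding separates_def by blast
  qed
  then show "separates Ed A B (insert x S)" "separates Ed A B (insert y S)"
    unfolding separates_def by blast+
qed

definition disjoint_dipaths :: "('a \<times> 'a) set \<Rightarrow> 'a set \<Rightarrow> 'a set \<Rightarrow> nat \<Rightarrow> bool" where
  "disjoint_dipaths Ed A B k \<longleftrightarrow>
    (\<exists>P. finite P \<and> card P = k \<and> disjoint_family_on set P \<and> (\<forall>p\<in>P. dipath_from_to Ed A B p))"

lemma disjoint_dipaths_mono: "disjoint_dipaths Ed A B k \<Longrightarrow> Ed \<subseteq> Ed' \<Longrightarrow> disjoint_dipaths Ed' A B k"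
  unfolding disjoint_dipaths_def dipath_from_to_def using dipath_mono by blast

lemma disjoint_dipaths_first_hits:
  assumes "finite X" "card P = card X" "disjoint_family_on set P" "\<forall>p\<in>P. dipath_from_to Ed A X p"
  obtains f where "\<And>a. a \<in> X \<Longrightarrow> dipath_from_to Ed A {a} (f a) \<and> set (butlast (f a)) \<inter> X = {}"
    "disjoint_family_on (\<lambda>a. set (f a)) X"
proof -
  let ?Q = "\<lambda>p'. dipath_from_to Ed A X p' \<and> set (butlast p') \<inter> X = {}"
  have "\<exists>p'. ?Q p' \<and> set p' \<subseteq> set p \<and> last p' \<in> X \<and> last p' \<in> set p'" if "p \<in> P" for p
  proof -
    have p: "dipath_from_to Ed A X p" using assms(4) that by blast
    then have "set p \<inter> X \<noteq> {}" unfolding dipath_from_to_def dipath_def using last_in_set by blast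
    with p obtain p1 z p2 where "p = p1 @ z # p2" "z \<in> X" "set p1 \<inter> X = {}"
        "dipath_from_to Ed A X (p1 @ [z])"
      by (rule dipath_from_to_first_hit)
    then show ?thesis by (intro exI[of _ "p1 @ [z]"]) auto
  qed
  then obtain f where f: "\<And>a. a \<in> X \<Longrightarrow> ?Q (f a) \<and> last (f a) = a"
    and "disjoint_family_on (\<lambda>a. set (f a)) X"
    using obtain_disjoint_paths_by_endpoint[OF assms(1-3), of ?Q last] by blast
  moreover have "dipath_from_to Ed A {a} (f a) \<and> set (butlast (f a)) \<inter> X = {}" if "a \<in> X" for a
    using f[OF that] unfolding dipath_from_to_def by auto
  ultimately show thesis using that by blast
qed

lemma disjoint_dipaths_last_hits:
  assumes "finite Y" "card P = card Y" "disjoint_family_on set P" "\<forall>p\<in>P. dipath_from_to Ed Y B p"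
  obtains h where "\<And>b. b \<in> Y \<Longrightarrow> dipath_from_to Ed {b} B (h b) \<and> set (tl (h b)) \<inter> Y = {}"
    "disjoint_family_on (\<lambda>b. set (h b)) Y"
proof -
  let ?Q = "\<lambda>p'. dipath_from_to Ed Y B p' \<and> set (tl p') \<inter> Y = {}"
  have "\<exists>p'. ?Q p' \<and> set p' \<subseteq> set p \<and> hd p' \<in> Y \<and> hd p' \<in> set p'" if "p \<in> P" for p
  proof -
    have p: "dipath_from_to Ed Y B p" using assms(4) that by blast
    then have "set p \<inter> Y \<noteq> {}" unfolding dipath_from_to_def dipath_def using hd_in_set by blast
    with p obtain p1 z p2 where "p = p1 @ z # p2" "z \<in> Y" "set p2 \<inter> Y = {}"
        "dipath_from_to Ed Y B (z # p2)"
      by (rule dipath_from_to_last_hit)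
    then show ?thesis by (intro exI[of _ "z # p2"]) auto
  qed
  then obtain h where h: "\<And>b. b \<in> Y \<Longrightarrow> ?Q (h b) \<and> hd (h b) = b"
    and "disjoint_family_on (\<lambda>b. set (h b)) Y"
    using obtain_disjoint_paths_by_endpoint[OF assms(1-3), of ?Q hd] by blast
  moreover have "dipath_from_to Ed {b} B (h b) \<and> set (tl (h b)) \<inter> Y = {}" if "b \<in> Y" for b
    using h[OF that] unfolding dipath_from_to_def by auto
  ultimately show thesis using that by blast
qed

lemma disjoint_dipathsI:
  assumes "finite I" "\<And>a. a \<in> I \<Longrightarrow> dipath_from_to Ed A B (G a)"
    and "\<And>a b. a \<in> I \<Longrightarrow> b \<in> I \<Longrightarrow> a \<noteq> b \<Longrightarrow> set (G a) \<inter> set (G b) = {}"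
  shows "disjoint_dipaths Ed A B (card I)"
proof -
  have "inj_on G I"
  proof (rule inj_onI)
    fix a b assume "a \<in> I" "b \<in> I" "G a = G b"
    moreover have "G a \<noteq> []" using assms(2)[OF \<open>a \<in> I\<close>] unfolding dipath_from_to_def dipath_def by blast
    ultimately show "a = b" using assms(3)[of a b] by force
  qed
  then have "card (G ` I) = card I" by (simp add: card_image)
  moreover have "disjoint_family_on set (G ` I)" unfolding disjoint_family_on_def using assms(3) by blast
  ultimately show ?thesis
    unfolding disjoint_dipaths_def using assms(1,2) by (intro exI[of _ "G ` I"]) auto
qed

lemma dipath_from_to_join:
  assumes "dipath_from_to Ed A {x} p" "dipath_from_to Ed {y} B q" "set p \<inter> set q = {}" "(x, y) \<in> Ed"
  shows "dipath_from_to Ed A B (p @ q)"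
  using assms unfolding dipath_from_to_def dipath_def by (auto simp: successively_append_iff)

lemma dipath_from_to_glue:
  assumes "dipath_from_to Ed A {a} p" "dipath_from_to Ed {a} B q" "set p \<inter> set q \<subseteq> {a}"
  shows "dipath_from_to Ed A B (p @ tl q)"
proof -
  obtain t where q: "q = a # t" using assms(2) unfolding dipath_from_to_def dipath_def by (cases q) auto
  then show ?thesis
    using assms unfolding dipath_from_to_def dipath_def
    by (cases t) (auto simp: successively_append_iff successively_Cons)
qed

text \<open>Paths into \<open>insert x S\<close> and paths out of \<open>insert y S\<close> that only meet the separator at
  their ends can only cross at common endpoints in \<open>S\<close>; gluing them there, and across the edge
  \<open>(x, y)\<close>, gives disjoint \<open>A\<close>--\<open>B\<close> paths.\<close>

lemma splice_disjoint_dipaths: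
  assumes S: "separates Ed' A B S" "finite S" "x \<notin> S" "y \<notin> S"
    and Ed: "Ed' \<subseteq> Ed" "(x, y) \<in> Ed"
    and f: "\<And>a. a \<in> insert x S \<Longrightarrow>
      dipath_from_to Ed' A {a} (f a) \<and> set (butlast (f a)) \<inter> insert x S = {}"
    and f_disj: "disjoint_family_on (\<lambda>a. set (f a)) (insert x S)"
    and h: "\<And>b. b \<in> insert y S \<Longrightarrow>
      dipath_from_to Ed' {b} B (h b) \<and> set (tl (h b)) \<inter> insert y S = {}"
    and h_disj: "disjoint_family_on (\<lambda>b. set (h b)) (insert y S)"
  shows "disjoint_dipaths Ed A B (Suc (card S))"
proof -
  have meet: "set (f a) \<inter> set (h b) \<subseteq> S \<inter> {a} \<inter> {b}"
    if "a \<in> insert x S" "b \<in> insert y S" for a b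
    using crossing_points_in_separator[where X = "insert x S" and Y = "insert y S", OF S(1)]
      f[OF that(1)] h[OF that(2)] by blast
  have f': "dipath_from_to Ed A {a} (f a)" if "a \<in> insert x S" for a
    using f[OF that] dipath_mono[OF _ Ed(1)] unfolding dipath_from_to_def by auto
  have h': "dipath_from_to Ed {b} B (h b)" if "b \<in> insert y S" for b
    using h[OF that] dipath_mono[OF _ Ed(1)] unfolding dipath_from_to_def by auto
  define other where "other a = (if a = x then y else a)" for a
  define G where "G a = (if a = x then f x @ h y else f a @ tl (h a))" for a
  have other: "other a \<in> insert y S" if "a \<in> insert x S" for a
    using that unfolding other_def by auto
  have G_path: "dipath_from_to Ed A B (G a)" if "a \<in> insert x S" for a
  proof (cases "a = x")
    case True
    then show ?thesis
      using dipath_from_to_join[OF f' h' _ Ed(2)] meet[of x y] S(3) unfolding G_def by auto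
  next
    case False
    then show ?thesis
      using dipath_from_to_glue[OF f' h'] meet[of a a] that unfolding G_def by auto
  qed
  have G_disj: "set (G a) \<inter> set (G b) = {}"
    if ab: "a \<in> insert x S" "b \<in> insert x S" "a \<noteq> b" for a b
  proof -
    have G_set: "set (G c) \<subseteq> set (f c) \<union> set (h (other c))" for c
      unfolding G_def other_def by (cases "h c") auto
    have "other a \<noteq> other b" using ab S(4) unfolding other_def by auto
    then have "set (h (other a)) \<inter> set (h (other b)) = {}"
      using h_disj other ab unfolding disjoint_family_on_def by blast
    moreover have "set (f a) \<inter> set (f b) = {}" using f_disj ab unfolding disjoint_family_on_def by blast
    moreover have "set (f c) \<inter> set (h (other d)) = {}"
      if "c \<in> insert x S" "d \<in> insert x S" "c \<noteq> d" for c d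
      using meet[OF that(1) other[OF that(2)]] that S(4) unfolding other_def by (auto split: if_splits)
    ultimately show ?thesis using G_set[of a] G_set[of b] ab by blast
  qed
  have "disjoint_dipaths Ed A B (card (insert x S))"
    using disjoint_dipathsI[where I = "insert x S" and G = G, OF _ G_path G_disj] S(2) by simp
  then show ?thesis using S(2,3) by simp
qed

lemma menger_without_edges:
  assumes "\<And>S. finite S \<Longrightarrow> separates {} A B S \<Longrightarrow> k \<le> card S"
  shows "disjoint_dipaths {} A B k"
proof -
  have "separates {} A B (A \<inter> B)"
    unfolding separates_def
  proof (intro allI impI)
    fix p assume p: "dipath_from_to {} A B p"
    then have "p = [hd p]" unfolding dipath_from_to_def dipath_def by (cases p rule: remdups_adj.cases) auto
    then show "set p \<inter> (A \<inter> B) \<noteq> {}" using p unfolding dipath_from_to_def by (metis last_ConsL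
          list.set_intros(1) IntI empty_iff)
  qed
  obtain K where K: "K \<subseteq> A \<inter> B" "card K = k" "finite K"
  proof (cases "finite (A \<inter> B)")
    case True
    then have "k \<le> card (A \<inter> B)" using assms \<open>separates {} A B (A \<inter> B)\<close> by blast
    then show thesis using obtain_subset_with_card_n that by blast
  next
    case False
    then show thesis using infinite_arbitrarily_large that by blast
  qed
  have "disjoint_dipaths {} A B (card K)"
    using K(1,3) by (intro disjoint_dipathsI[where G = "\<lambda>a. [a]"]) (auto simp: dipath_from_to_def dipath_def)
  then show ?thesis using K(2) by simp
qed

text \<open>The induction step of Menger's theorem (Goering's proof by edge deletion): if deleting
  the edge \<open>(x, y)\<close> creates a separator \<open>S\<close> smaller than \<open>k\<close>, then both \<open>insert x S\<close> and
  \<open>insert y S\<close> are minimum separators of the original graph, and the disjoint paths from \<open>A\<close>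
  to the first and from the second to \<open>B\<close> in the smaller graph can be spliced.\<close>

lemma menger_delete_edge:
  fixes Ed :: "('a \<times> 'a) set" and x y :: 'a
  defines "Ed' \<equiv> Ed - {(x, y)}"
  assumes menger_Ed': "\<And>A B k. (\<And>S. finite S \<Longrightarrow> separates Ed' A B S \<Longrightarrow> k \<le> card S) \<Longrightarrow>
      disjoint_dipaths Ed' A B k"
    and e: "(x, y) \<in> Ed" and large: "\<And>S. finite S \<Longrightarrow> separates Ed A B S \<Longrightarrow> k \<le> card S"
  shows "disjoint_dipaths Ed A B k"
proof (cases "\<forall>S. finite S \<and> separates Ed' A B S \<longrightarrow> k \<le> card S")
  case True
  then have "disjoint_dipaths Ed' A B k" using menger_Ed' by blast
  then show ?thesis using disjoint_dipaths_mono unfolding Ed'_def by blast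
next
  case False
  then obtain S where S: "finite S" "separates Ed' A B S" "card S < k" by auto
  let ?X = "insert x S" and ?Y = "insert y S"
  have sep: "separates Ed A B ?X" "separates Ed A B ?Y"
    using separates_delete_edge[of Ed x y A B S] S(2) unfolding Ed'_def by blast+
  then have le: "k \<le> card ?X" "k \<le> card ?Y" using large S(1) by auto
  then have xy: "x \<notin> S" "y \<notin> S" using S(3) by (auto simp: insert_absorb)
  then have k: "card ?X = k" "card ?Y = k" using le S(1,3) by simp_all
  have "Ed' \<subseteq> Ed" "\<And>a b. (a, b) \<in> Ed - Ed' \<Longrightarrow> a \<in> ?X \<and> b \<in> ?Y" unfolding Ed'_def by auto
  then have "k \<le> card T" if "finite T" "separates Ed' A ?X T \<or> separates Ed' ?Y B T" for T
    using that separates_via_tails[OF sep(1)] separates_via_heads[OF sep(2)] large by meson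
  then have "disjoint_dipaths Ed' A ?X k" "disjoint_dipaths Ed' ?Y B k"
    using menger_Ed' by blast+
  then obtain P1 P2 where P1: "card P1 = card ?X" "disjoint_family_on set P1" "\<forall>p\<in>P1. dipath_from_to Ed' A ?X p"
    and P2: "card P2 = card ?Y" "disjoint_family_on set P2" "\<forall>p\<in>P2. dipath_from_to Ed' ?Y B p"
    unfolding disjoint_dipaths_def k by blast
  obtain f where f: "\<And>a. a \<in> ?X \<Longrightarrow> dipath_from_to Ed' A {a} (f a) \<and> set (butlast (f a)) \<inter> ?X = {}"
    and f_disj: "disjoint_family_on (\<lambda>a. set (f a)) ?X"
    using disjoint_dipaths_first_hits[OF _ P1] S(1) by blast
  obtain h where h: "\<And>b. b \<in> ?Y \<Longrightarrow> dipath_from_to Ed' {b} B (h b) \<and> set (tl (h b)) \<inter> ?Y = {}"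
    and h_disj: "disjoint_family_on (\<lambda>b. set (h b)) ?Y"
    using disjoint_dipaths_last_hits[OF _ P2] S(1) by blast
  have "disjoint_dipaths Ed A B (Suc (card S))"
    using splice_disjoint_dipaths[OF S(2,1) xy \<open>Ed' \<subseteq> Ed\<close> e f f_disj h h_disj] by blast
  then show ?thesis using k(1) S(1) xy(1) by simp
qed

theorem menger:
  assumes "finite Ed" "\<And>S. finite S \<Longrightarrow> separates Ed A B S \<Longrightarrow> k \<le> card S"
  shows "disjoint_dipaths Ed A B k"
  using assms
proof (induction "card Ed" arbitrary: Ed A B k rule: less_induct)
  case less
  show ?case
  proof (cases "Ed = {}")
    case True
    then show ?thesis using menger_without_edges less.prems(2) by blast
  next
    case False
    then obtain x y where e: "(x, y) \<in> Ed" by auto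
    have "finite (Ed - {(x, y)})" "card (Ed - {(x, y)}) < card Ed"
      using less.prems(1) card_Diff1_less[OF less.prems(1) e] by auto
    then show ?thesis using menger_delete_edge[OF _ e less.prems(2)] less.hyps by blast
  qed
qed

section \<open>Breadth-first layers below a root\<close>

lemma is_path_iff: "is_path V E p \<longleftrightarrow> p \<noteq> [] \<and> distinct p \<and> set p \<subseteq> V \<and> successively E p"
  unfolding is_path_def successively_conv_nth by auto

lemma card_disjoint_qualifying_le:
  assumes "finite V" "disjoint_at x P" "\<forall>p\<in>P. \<exists>v. qualifying V E \<sigma> l x v p"
  shows "card P \<le> card V"
proof (cases "finite P")
  case True
  have last: "last p \<in> V - {x} \<and> last p \<in> set p" if p: "p \<in> P" for p
  proof -
    obtain v where "qualifying V E \<sigma> l x v p" using assms(3) p by blast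
    then have "p \<noteq> []" "set p \<subseteq> V" "last p \<noteq> x" unfolding qualifying_def is_path_def by auto
    then show ?thesis using last_in_set by blast
  qed
  have "inj_on last P"
  proof (rule inj_onI)
    fix p q assume pq: "p \<in> P" "q \<in> P" "last p = last q"
    show "p = q"
    proof (rule ccontr)
      assume "p \<noteq> q"
      then have "set p \<inter> set q = {x}" using assms(2) pq(1,2) unfolding disjoint_at_def by blast
      then show False using last[OF pq(1)] last[OF pq(2)] pq(3) by auto
    qed
  qed
  then have "card P = card (last ` P)" by (simp add: card_image)
  also have "\<dots> \<le> card V" using last assms(1) by (intro card_mono) auto
  finally show ?thesis .
qed simp

lemma card_le_est:
  assumes "finite V" "disjoint_at x F"
    and "\<forall>p\<in>F. \<exists>v. qualifying V E \<sigma> r x v p \<and> shortest_qualifying V E \<sigma> (path_len p) x v p"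
  shows "card F \<le> est V E \<sigma> r x"
proof -
  let ?S = "{card P |P. disjoint_at x P
    \<and> (\<forall>p\<in>P. \<exists>v. qualifying V E \<sigma> r x v p \<and> shortest_qualifying V E \<sigma> (path_len p) x v p)}"
  have "?S \<subseteq> {..card V}"
    using card_disjoint_qualifying_le[OF assms(1)] by fastforce
  then have "finite ?S" by (rule finite_subset) simp
  moreover have "card F \<in> ?S" using assms(2,3) by blast
  ultimately show ?thesis unfolding est_def by (rule Max_ge)
qed

locale rooted_ordered_graph =
  fixes V :: "'a set" and E :: "'a \<Rightarrow> 'a \<Rightarrow> bool" and \<sigma> :: "('a \<times> 'a) set"
    and r :: nat and u :: 'a
  assumes graph: "simple_graph V E" and order: "total_order_on V \<sigma>" and root: "u \<in> V"
begin

abbreviation precedes :: "'a \<Rightarrow> 'a \<Rightarrow> bool" (infix "\<prec>" 50) where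
  "a \<prec> b \<equiv> (a, b) \<in> \<sigma>"

lemma finite_V: "finite V"
  using graph unfolding simple_graph_def by blast

lemma edge_in_V: "E a b \<Longrightarrow> a \<in> V \<and> b \<in> V"
  using graph unfolding simple_graph_def by blast

lemma edge_sym: "E a b \<Longrightarrow> E b a"
  using graph unfolding simple_graph_def by blast

lemma prec_trans: "a \<prec> b \<Longrightarrow> b \<prec> c \<Longrightarrow> a \<prec> c"
  using order unfolding total_order_on_def strict_linear_order_on_def trans_def by blast

lemma prec_irrefl: "\<not> a \<prec> a"
  using order unfolding total_order_on_def strict_linear_order_on_def irrefl_def by blast

lemma prec_total: "a \<in> V \<Longrightarrow> b \<in> V \<Longrightarrow> a \<noteq> b \<Longrightarrow> a \<prec> b \<or> b \<prec> a"
  using order unfolding total_order_on_def strict_linear_order_on_def total_on_def by blast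

lemma prec_in_V: "a \<prec> b \<Longrightarrow> a \<in> V \<and> b \<in> V"
  using order unfolding total_order_on_def by blast

definition le_root :: "'a \<Rightarrow> bool" where
  "le_root w \<longleftrightarrow> w = u \<or> w \<prec> u"

text \<open>The qualifying paths from the root are the distinct \<open>low_walk\<close>s that end after the
  root (see \<open>reach_iff\<close>).\<close>

definition low_walk :: "'a list \<Rightarrow> bool" where
  "low_walk w \<longleftrightarrow> w \<noteq> [] \<and> set w \<subseteq> V \<and> successively E w \<and> (\<forall>z\<in>set (butlast w). le_root z)"

definition reachable :: "'a set" where
  "reachable = {last w |w. low_walk w \<and> hd w = u}"

definition depth :: "'a \<Rightarrow> nat" where
  "depth v = (LEAST n. \<exists>w. low_walk w \<and> hd w = u \<and> last w = v \<and> path_len w = n)"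

lemma le_root_in_V: "le_root w \<Longrightarrow> w \<in> V"
  unfolding le_root_def using root prec_in_V by blast

lemma reachable_subset_V: "reachable \<subseteq> V"
  unfolding reachable_def low_walk_def by auto

lemma depth_le_path_len: "low_walk w \<Longrightarrow> hd w = u \<Longrightarrow> depth (last w) \<le> path_len w"
  unfolding depth_def by (rule Least_le) blast

lemma reachableI: "low_walk w \<Longrightarrow> hd w = u \<Longrightarrow> last w \<in> reachable"
  unfolding reachable_def by blast

lemma low_walk_take:
  assumes "low_walk w" "i < length w"
  shows "low_walk (take (Suc i) w)"
proof -
  have "successively E (take (Suc i) w)"
    using assms(1) unfolding low_walk_def by (metis append_take_drop_id successively_append_iff)
  moreover have "set (take i w) \<subseteq> set (butlast w)"
    using assms(2) unfolding butlast_conv_take by (intro set_take_subset_set_take) simp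
  ultimately show ?thesis
    using assms set_take_subset[of "Suc i" w] unfolding low_walk_def by (auto simp: butlast_take)
qed

lemma low_walk_drop:
  assumes "low_walk w" "i < length w"
  shows "low_walk (drop i w)"
proof -
  have "successively E (drop i w)"
    using assms(1) unfolding low_walk_def by (metis append_take_drop_id successively_append_iff)
  then show ?thesis
    using assms set_drop_subset[of i w] set_drop_subset[of i "butlast w"]
    unfolding low_walk_def by (auto simp: butlast_drop)
qed

lemma obtain_shortest_root_path:
  assumes "v \<in> reachable"
  obtains p where "low_walk p" "distinct p" "hd p = u" "last p = v" "path_len p = depth v"
proof -
  have "\<exists>n w. low_walk w \<and> hd w = u \<and> last w = v \<and> path_len w = n"
    using assms unfolding reachable_def by blast
  then have "\<exists>w. low_walk w \<and> hd w = u \<and> last w = v \<and> path_len w = depth v"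
    unfolding depth_def by (rule LeastI_ex)
  then obtain w where w: "low_walk w" "hd w = u" "last w = v" "path_len w = depth v"
    by blast
  then obtain p where p: "p \<noteq> []" "distinct p" "successively E p" "hd p = hd w" "last p = last w"
      "set p \<subseteq> set w" "length p \<le> length w"
    using successively_distinct_subwalk[of E w] unfolding low_walk_def by blast
  have "le_root z" if "z \<in> set (butlast p)" for z
  proof -
    have "z \<noteq> last w" using that p(1,2,5) by (cases p rule: rev_cases) auto
    then have "z \<in> set (butlast w)"
      using that p(6) set_eq_insert_last_butlast[of w] w(1) unfolding low_walk_def
      by (auto dest: in_set_butlastD)
    then show ?thesis using w(1) unfolding low_walk_def by blast
  qed
  then have "low_walk p" using p w(1) unfolding low_walk_def by auto
  moreover have "path_len p = depth v"
    using depth_le_path_len[OF \<open>low_walk p\<close>] p(4,5,7) w unfolding path_len_def by simp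
  ultimately show thesis using that p w by simp
qed

lemma depth_extend:
  assumes "a \<in> reachable" "low_walk q" "hd q = a"
  shows "last q \<in> reachable \<and> depth (last q) \<le> depth a + path_len q"
proof (cases "tl q = []")
  case True
  then have "q = [a]" using assms(2,3) unfolding low_walk_def by (cases q) auto
  then show ?thesis using assms(1) by simp
next
  case False
  obtain s where s: "low_walk s" "hd s = u" "last s = a" "path_len s = depth a"
    using obtain_shortest_root_path[OF assms(1)] by blast
  obtain t where q: "q = a # t" "t \<noteq> []" using assms(2,3) False unfolding low_walk_def by (cases q) auto
  define w where "w = s @ t"
  have "low_walk w"
    using s(1) assms(2) q s(3) set_eq_insert_last_butlast[of s]
    unfolding w_def low_walk_def by (auto simp: successively_append_iff successively_Cons butlast_append)
  moreover have "hd w = u" "last w = last q" using s q unfolding w_def low_walk_def by auto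
  moreover have "path_len w = depth a + path_len q"
    using s(1,4) q unfolding w_def low_walk_def path_len_def by (cases s) auto
  ultimately show ?thesis using depth_le_path_len[of w] reachableI[of w] by simp
qed

lemma root_reachable: "u \<in> reachable" and depth_root: "depth u = 0"
proof -
  have "low_walk [u]" using root unfolding low_walk_def by simp
  then show "u \<in> reachable" "depth u = 0"
    using reachableI[of "[u]"] depth_le_path_len[of "[u]"] unfolding path_len_def by auto
qed

lemma shortest_root_walk_depth:
  assumes "low_walk s" "hd s = u" "path_len s = depth (last s)" "i < length s"
  shows "s ! i \<in> reachable" "depth (s ! i) = i"
proof -
  let ?pre = "take (Suc i) s" and ?suf = "drop i s"
  have "hd ?pre = u" using assms(2,4) by (cases s) simp_all
  then have pre: "low_walk ?pre" "hd ?pre = u" "last ?pre = s ! i" "path_len ?pre = i"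
    using low_walk_take[OF assms(1,4)] assms(4) unfolding path_len_def
    by (simp_all add: take_Suc_conv_app_nth)
  then have reach: "s ! i \<in> reachable" and le: "depth (s ! i) \<le> i"
    using reachableI[of ?pre] depth_le_path_len[of ?pre] by simp_all
  have "low_walk ?suf" "hd ?suf = s ! i" "last ?suf = last s"
    using low_walk_drop assms(1,4) by (auto simp: hd_drop_conv_nth)
  then have "depth (last s) \<le> depth (s ! i) + path_len ?suf"
    using depth_extend[OF reach, of ?suf] by simp
  then show "s ! i \<in> reachable" "depth (s ! i) = i"
    using reach le assms(3,4) unfolding path_len_def by auto
qed

lemma qualifying_low_walk:
  assumes "le_root x" "qualifying V E \<sigma> l x v q"
  shows "low_walk q"
proof -
  have q: "q \<noteq> []" "distinct q" "set q \<subseteq> V" "successively E q" "last q = v"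
    "\<forall>z\<in>set q. z \<noteq> x \<and> z \<noteq> v \<longrightarrow> z \<prec> x"
    using assms(2) unfolding qualifying_def is_path_iff by auto
  have "le_root z" if "z \<in> set (butlast q)" for z
  proof -
    have "z \<noteq> v" using that q(1,2,5) by (cases q rule: rev_cases) auto
    show ?thesis
    proof (cases "z = x")
      case False
      then have "z \<prec> x" using q(6) in_set_butlastD[OF that] \<open>z \<noteq> v\<close> by blast
      then show ?thesis using assms(1) prec_trans unfolding le_root_def by blast
    qed (use assms(1) in simp)
  qed
  then show ?thesis using q unfolding low_walk_def by blast
qed

lemma qualifying_rev_low_walk:
  assumes "le_root x" "le_root v" "qualifying V E \<sigma> l x v q"
  shows "low_walk (rev q)"
proof -
  have q: "q \<noteq> []" "distinct q" "set q \<subseteq> V" "successively E q" "hd q = x"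
    "\<forall>z\<in>set q. z \<noteq> x \<and> z \<noteq> v \<longrightarrow> z \<prec> x"
    using assms(3) unfolding qualifying_def is_path_iff by auto
  have "le_root z" if "z \<in> set (tl q)" for z
  proof -
    have "z \<noteq> x" "z \<in> set q" using that q(1,2,5) by (cases q, auto)+
    then show ?thesis using q(6) assms(1,2) prec_trans unfolding le_root_def by (cases "z = v") auto
  qed
  moreover have "successively E (rev q)"
    unfolding successively_rev using q(4) by (rule successively_mono) (simp add: edge_sym)
  ultimately show ?thesis using q(1,3) unfolding low_walk_def by auto
qed

lemma reach_iff: "v \<in> reach V E \<sigma> l u \<longleftrightarrow> v \<in> reachable \<and> u \<prec> v \<and> depth v \<le> l"
proof
  assume "v \<in> reach V E \<sigma> l u"
  then obtain p where p: "qualifying V E \<sigma> l u v p" unfolding reach_def by blast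
  then have "low_walk p" using qualifying_low_walk unfolding le_root_def by blast
  moreover have "hd p = u" "last p = v" "u \<prec> v" "path_len p \<le> l"
    using p unfolding qualifying_def by auto
  ultimately show "v \<in> reachable \<and> u \<prec> v \<and> depth v \<le> l"
    using reachableI[of p] depth_le_path_len[of p] by auto
next
  assume v: "v \<in> reachable \<and> u \<prec> v \<and> depth v \<le> l"
  then obtain p where p: "low_walk p" "distinct p" "hd p = u" "last p = v" "path_len p = depth v"
    using obtain_shortest_root_path by blast
  have "z \<prec> u" if "z \<in> set p" "z \<noteq> u" "z \<noteq> v" for z
    using that p(1,4) set_eq_insert_last_butlast[of p] unfolding low_walk_def le_root_def by auto
  then have "qualifying V E \<sigma> l u v p"
    using p v prec_irrefl unfolding qualifying_def is_path_iff low_walk_def by auto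
  then show "v \<in> reach V E \<sigma> l u" unfolding reach_def by blast
qed

lemma dist_reach_eq_depth:
  assumes "v \<in> reach V E \<sigma> l u"
  shows "dist_reach V E \<sigma> u v = depth v"
  unfolding dist_reach_def
proof (rule Least_equality)
  show "v \<in> reach V E \<sigma> (depth v) u" using assms reach_iff by blast
qed (use reach_iff in blast)

text \<open>The edges of a breadth-first search from the root that only expands vertices not after
  the root.\<close>

definition bfs_edge :: "'a \<Rightarrow> 'a \<Rightarrow> bool" where
  "bfs_edge a b \<longleftrightarrow> E a b \<and> le_root a \<and> a \<in> reachable \<and> depth b = Suc (depth a)"

definition bfs_walk :: "'a list \<Rightarrow> bool" where
  "bfs_walk w \<longleftrightarrow> w \<noteq> [] \<and> successively bfs_edge w"

lemma bfs_edge_reachable: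
  assumes "bfs_edge a b"
  shows "a \<in> reachable \<and> b \<in> reachable"
proof -
  have "a \<in> reachable" "low_walk [a, b]" "hd [a, b] = a"
    using assms edge_in_V unfolding bfs_edge_def low_walk_def by auto
  then show ?thesis using depth_extend by fastforce
qed

lemma bfs_walk_depth:
  assumes "bfs_walk w" "i < length w"
  shows "depth (w ! i) = depth (hd w) + i"
  using assms unfolding bfs_walk_def
proof (induction w arbitrary: i)
  case (Cons a w)
  show ?case
  proof (cases i)
    case (Suc j)
    then have w: "w \<noteq> []" "bfs_edge a (hd w)" "successively bfs_edge w"
      using Cons.prems by (auto simp: successively_Cons)
    then have "depth (w ! j) = depth (hd w) + j" using Cons.IH Suc Cons.prems(2) by simp
    then show ?thesis using w(2) Suc unfolding bfs_edge_def by simp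
  qed simp
qed simp

lemma bfs_walk_distinct: "bfs_walk w \<Longrightarrow> distinct w"
  unfolding distinct_conv_nth by (metis bfs_walk_depth add_left_cancel)

lemma bfs_walk_depth_last: "bfs_walk w \<Longrightarrow> depth (last w) = depth (hd w) + path_len w"
  using bfs_walk_depth[of w "length w - 1"] unfolding bfs_walk_def path_len_def
  by (simp add: last_conv_nth)

lemma bfs_walk_depth_bounds:
  assumes "bfs_walk w" "z \<in> set w"
  shows "depth (hd w) \<le> depth z" "depth z \<le> depth (last w)" "z \<noteq> hd w \<Longrightarrow> depth (hd w) < depth z"
proof -
  obtain i where i: "i < length w" "z = w ! i" using assms(2) by (auto simp: in_set_conv_nth)
  then show "depth (hd w) \<le> depth z" "depth z \<le> depth (last w)"
    using bfs_walk_depth[OF assms(1)] bfs_walk_depth_last[OF assms(1)] unfolding path_len_def by auto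
  show "depth (hd w) < depth z" if "z \<noteq> hd w"
  proof -
    have "i \<noteq> 0" using that i assms(1) unfolding bfs_walk_def by (metis hd_conv_nth)
    then show ?thesis using bfs_walk_depth[OF assms(1) i(1)] i(2) by simp
  qed
qed

lemma bfs_walk_reachable:
  assumes "bfs_walk w" "hd w \<in> reachable"
  shows "set w \<subseteq> reachable"
proof
  fix z assume "z \<in> set w"
  then have "z = hd w \<or> z \<in> set (tl w)" using assms(1) unfolding bfs_walk_def by (cases w) auto
  then show "z \<in> reachable"
    using assms successively_predecessor[of bfs_edge w z] bfs_edge_reachable
    unfolding bfs_walk_def by blast
qed

lemma bfs_walk_append:
  assumes "bfs_walk w" "bfs_walk w'" "last w = hd w'"
  shows "bfs_walk (w @ tl w')" "hd (w @ tl w') = hd w" "last (w @ tl w') = last w'"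
proof -
  obtain t where t: "w' = last w # t" using assms(2,3) unfolding bfs_walk_def by (cases w') auto
  then show "bfs_walk (w @ tl w')"
    using assms(1,2) unfolding bfs_walk_def by (auto simp: successively_append_iff successively_Cons)
  show "hd (w @ tl w') = hd w" using assms(1) unfolding bfs_walk_def by simp
  show "last (w @ tl w') = last w'" using t by (cases t) auto
qed

lemma bfs_walk_split:
  assumes "bfs_walk (w1 @ c # w2)"
  shows "bfs_walk (w1 @ [c])" "bfs_walk (c # w2)"
  using assms unfolding bfs_walk_def by (auto simp: successively_append_iff successively_Cons)

lemma shortest_root_walk_depth_butlast:
  assumes "low_walk s" "hd s = u" "path_len s = depth (last s)" "z \<in> set (butlast s)"
  shows "depth z < depth (last s)"
proof -
  obtain i where i: "i < length (butlast s)" "z = s ! i"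
    using assms(4) by (auto simp: in_set_conv_nth nth_butlast)
  then show ?thesis using shortest_root_walk_depth(2)[OF assms(1-3), of i] assms(3)
    unfolding path_len_def by simp
qed

lemma shortest_root_walk_bfs:
  assumes "low_walk s" "hd s = u" "path_len s = depth (last s)"
  shows "bfs_walk s"
  unfolding bfs_walk_def successively_conv_nth
proof (intro conjI allI impI)
  show "s \<noteq> []" using assms(1) unfolding low_walk_def by blast
  fix i assume i: "Suc i < length s"
  have ib: "i < length (butlast s)" using i by simp
  have "s ! i \<in> set (butlast s)" using nth_mem[OF ib] nth_butlast[OF ib] by simp
  then have "le_root (s ! i)" using assms(1) unfolding low_walk_def by blast
  moreover have "E (s ! i) (s ! Suc i)" using assms(1) i unfolding low_walk_def by (simp add: successively_nth)
  ultimately show "bfs_edge (s ! i) (s ! Suc i)"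
    using shortest_root_walk_depth[OF assms, of i] shortest_root_walk_depth[OF assms, of "Suc i"] i
    unfolding bfs_edge_def by simp
qed

definition descendants :: "'a \<Rightarrow> 'a set" where
  "descendants y = {v \<in> reach V E \<sigma> r u. \<exists>w. bfs_walk w \<and> hd w = y \<and> last w = v}"

lemma finite_descendants: "finite (descendants y)"
proof (rule finite_subset)
  show "descendants y \<subseteq> V" using reach_iff prec_in_V unfolding descendants_def by blast
qed (rule finite_V)

lemma descendants_trans:
  assumes "bfs_walk w"
  shows "descendants (last w) \<subseteq> descendants (hd w)"
proof
  fix v assume "v \<in> descendants (last w)"
  then obtain w' where w': "v \<in> reach V E \<sigma> r u" "bfs_walk w'" "hd w' = last w" "last w' = v"
    unfolding descendants_def by blast
  note app = bfs_walk_append[OF assms w'(2) w'(3)[symmetric]]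
  show "v \<in> descendants (hd w)"
    unfolding descendants_def using w'(1,4) app by blast
qed

lemma descendants_depth:
  assumes "v \<in> descendants y"
  shows "depth y \<le> depth v" "v \<noteq> y \<Longrightarrow> depth y < depth v" "depth v \<le> r"
proof -
  obtain w where "bfs_walk w" "hd w = y" "last w = v"
    using assms unfolding descendants_def by blast
  moreover have "v \<in> set w" using calculation unfolding bfs_walk_def by auto
  ultimately show "depth y \<le> depth v" "v \<noteq> y \<Longrightarrow> depth y < depth v"
    using bfs_walk_depth_bounds by blast+
  show "depth v \<le> r" using assms reach_iff unfolding descendants_def by blast
qed

lemma descendants_before_root_deeper:
  assumes "y \<prec> u" "v \<in> descendants y"
  shows "depth y < depth v"
proof -
  have "u \<prec> v" using assms(2) reach_iff unfolding descendants_def by blast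
  then have "v \<noteq> y" using assms(1) prec_trans prec_irrefl by blast
  then show ?thesis using descendants_depth(2)[OF assms(2)] by simp
qed

lemma descendants_not_le_root: "\<not> le_root y \<Longrightarrow> descendants y \<subseteq> {y}"
  unfolding descendants_def bfs_walk_def bfs_edge_def
  by (auto elim: successively.elims)

lemma descendants_root: "descendants u = reach V E \<sigma> r u"
proof
  show "reach V E \<sigma> r u \<subseteq> descendants u"
  proof
    fix v assume v: "v \<in> reach V E \<sigma> r u"
    then obtain s where "low_walk s" "hd s = u" "last s = v" "path_len s = depth v"
      using reach_iff obtain_shortest_root_path by metis
    then show "v \<in> descendants u"
      using v shortest_root_walk_bfs unfolding descendants_def by blast
  qed
qed (auto simp: descendants_def)

lemma depth_one_ancestor:
  assumes "c \<in> reachable" "c \<noteq> u"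
  obtains y where "y \<in> reachable" "depth y = 1" "descendants c \<subseteq> descendants y"
proof -
  obtain s where s: "low_walk s" "hd s = u" "last s = c" "path_len s = depth c"
    using obtain_shortest_root_path[OF assms(1)] by blast
  then obtain s' where s': "s = u # s'" unfolding low_walk_def by (cases s) auto
  then have "s' \<noteq> []" using s(3) assms(2) by auto
  then have "bfs_walk s'" "last s' = c"
    using shortest_root_walk_bfs[of s] s s' \<open>s' \<noteq> []\<close> unfolding bfs_walk_def
    by (auto simp: successively_Cons)
  moreover have "hd s' \<in> reachable" "depth (hd s') = 1"
    using shortest_root_walk_depth[of s 1] s s' \<open>s' \<noteq> []\<close> by (auto simp: hd_conv_nth)
  ultimately show thesis using that descendants_trans by blast
qed

text \<open>The digraph in which Menger's theorem is applied at a vertex \<open>x\<close>.\<close>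

definition climb_arcs :: "'a \<Rightarrow> ('a \<times> 'a) set" where
  "climb_arcs x = {(a, b). bfs_edge a b \<and> a \<prec> x}"

definition climb_sources :: "'a \<Rightarrow> 'a set" where
  "climb_sources x = {b. bfs_edge x b}"

definition climb_targets :: "'a \<Rightarrow> 'a set" where
  "climb_targets x = {v. x \<prec> v \<and> depth v \<le> r}"

lemma finite_climb_arcs: "finite (climb_arcs x)"
proof (rule finite_subset)
  show "climb_arcs x \<subseteq> V \<times> V" unfolding climb_arcs_def bfs_edge_def using edge_in_V by auto
qed (use finite_V in simp)

lemma climb_path_qualifying:
  assumes x: "x \<in> reachable" "le_root x"
    and p: "dipath_from_to (climb_arcs x) (climb_sources x) (climb_targets x) p"
  shows "qualifying V E \<sigma> r x (last p) (x # p)"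
    "shortest_qualifying V E \<sigma> (path_len (x # p)) x (last p) (x # p)"
    "\<forall>z\<in>set p. depth x < depth z"
proof -
  have arcs: "successively (\<lambda>a b. (a, b) \<in> climb_arcs x) p"
    and p': "p \<noteq> []" "bfs_edge x (hd p)" "x \<prec> last p" "depth (last p) \<le> r"
    using p unfolding dipath_from_to_def dipath_def climb_sources_def climb_targets_def by auto
  have walk: "bfs_walk (x # p)"
    using arcs p' unfolding bfs_walk_def climb_arcs_def
    by (auto simp: successively_Cons elim: successively_mono)
  then show deeper: "\<forall>z\<in>set p. depth x < depth z"
    using bfs_walk_depth_bounds(3)[OF walk] bfs_walk_distinct[OF walk] by auto
  have len: "depth (last p) = depth x + path_len (x # p)" "path_len (x # p) = length p"
    using bfs_walk_depth_last[OF walk] p'(1) unfolding path_len_def by auto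
  have interior: "z \<prec> x" if "z \<in> set (x # p)" "z \<noteq> x" "z \<noteq> last p" for z
  proof -
    have "z \<in> set (butlast p)" using that p'(1) set_eq_insert_last_butlast[of p] by auto
    then show ?thesis using successively_successor[OF arcs] unfolding climb_arcs_def by blast
  qed
  have "is_path V E (x # p)"
    using walk bfs_walk_distinct[OF walk] bfs_walk_reachable[OF walk] x(1) reachable_subset_V
    unfolding is_path_iff bfs_walk_def bfs_edge_def by (auto elim: successively_mono)
  then have qual: "qualifying V E \<sigma> l x (last p) (x # p)" if "length p \<le> l" for l
    using that p'(1,3) len(2) interior prec_irrefl unfolding qualifying_def by auto
  then show "qualifying V E \<sigma> r x (last p) (x # p)" using len p'(4) by simp
  have "\<not> qualifying V E \<sigma> (length p - 1) x (last p) q" for q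
  proof
    assume q: "qualifying V E \<sigma> (length p - 1) x (last p) q"
    then have "low_walk q" "hd q = x" "last q = last p" "path_len q \<le> length p - 1"
      using qualifying_low_walk[OF x(2)] unfolding qualifying_def by auto
    then show False using depth_extend[OF x(1), of q] len p'(1) by (cases p) auto
  qed
  then show "shortest_qualifying V E \<sigma> (path_len (x # p)) x (last p) (x # p)"
    using qual len(2) unfolding shortest_qualifying_def by simp
qed

text \<open>The extra path that a vertex \<open>x\<close> before the root has: follow a shortest root walk to
  \<open>x\<close> backwards until the first vertex after \<open>x\<close>. All its vertices are shallower than \<open>x\<close>,
  so it avoids every climbing path.\<close>

lemma descending_qualifying_path:
  assumes x: "x \<in> reachable" "x \<prec> u" "depth x \<le> r"
  obtains q where "qualifying V E \<sigma> r x (last q) q"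
    "shortest_qualifying V E \<sigma> (path_len q) x (last q) q" "\<forall>z\<in>set q. z \<noteq> x \<longrightarrow> depth z < depth x"
proof -
  obtain s where s: "low_walk s" "distinct s" "hd s = u" "last s = x" "path_len s = depth x"
    using obtain_shortest_root_path[OF x(1)] by blast
  have s_ne: "s \<noteq> []" using s(1) unfolding low_walk_def by blast
  have "u \<in> set (butlast s)"
    using s(3,4) s_ne x(2) prec_irrefl set_eq_insert_last_butlast[of s] by (metis hd_in_set insertE)
  then obtain ys b zs where bs: "butlast s = ys @ b # zs" "x \<prec> b" "\<forall>z\<in>set zs. \<not> x \<prec> z"
    using split_list_last_prop[of "butlast s" "\<lambda>z. x \<prec> z"] x(2) by blast
  have s_eq: "s = ys @ b # zs @ [x]" using bs(1) s(4) s_ne by (metis append_butlast_last_id append.assoc append_Cons)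
  have depth_s: "depth (s ! i) = i" if "i < length s" for i
    using shortest_root_walk_depth(2)[OF s(1,3)] s(4,5) that by simp
  have depth_b: "depth b = length ys" using depth_s[of "length ys"] s_eq by (simp add: nth_append)
  have depth_x: "depth x = length ys + length zs + 1" using s(5) s_eq unfolding path_len_def by simp
  have b_low: "b \<in> reachable" "le_root b"
    using shortest_root_walk_depth(1)[OF s(1,3), of "length ys"] s(4,5) s(1) bs(1) s_eq
    unfolding low_walk_def by (auto simp: nth_append)
  define q where "q = x # rev zs @ [b]"
  have "successively E (b # zs @ [x])" "distinct (b # zs @ [x])" "set (b # zs @ [x]) \<subseteq> V"
    using s(1,2) s_eq unfolding low_walk_def by (auto simp: successively_append_iff)
  moreover have "successively E (rev (b # zs @ [x]))"
    unfolding successively_rev using calculation(1) by (rule successively_mono) (simp add: edge_sym)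
  ultimately have "is_path V E q" unfolding is_path_iff q_def by auto
  moreover have "z \<prec> x" if "z \<in> set zs" for z
    using that bs(3) s(1,2) s_eq prec_total[of z x] unfolding low_walk_def by auto
  ultimately have qual: "qualifying V E \<sigma> l x b q" if "length zs + 1 \<le> l" for l
    using that bs(2) prec_irrefl unfolding qualifying_def q_def path_len_def by auto
  have "\<not> qualifying V E \<sigma> (length zs) x b q'" for q'
  proof
    assume q': "qualifying V E \<sigma> (length zs) x b q'"
    then have "low_walk (rev q')"
      using qualifying_rev_low_walk b_low(2) x(2) unfolding le_root_def by blast
    moreover have "hd (rev q') = b" "last (rev q') = x" "path_len (rev q') \<le> length zs"
      using q' unfolding qualifying_def is_path_def path_len_def by (auto simp: hd_rev last_rev)
    ultimately show False using depth_extend[OF b_low(1), of "rev q'"] depth_b depth_x by simp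
  qed
  moreover have "\<forall>z\<in>set q. z \<noteq> x \<longrightarrow> depth z < depth x"
    using shortest_root_walk_depth_butlast[OF s(1,3)] s(4,5) bs(1) unfolding q_def by auto
  ultimately show thesis
    using that[of q] qual[of r] qual[of "length zs + 1"] depth_x x(3)
    unfolding shortest_qualifying_def q_def path_len_def by auto
qed

lemma climbing_paths_card_le_est:
  assumes x: "x \<in> reachable" "le_root x" "depth x \<le> r"
    and P: "finite P" "disjoint_family_on set P"
      "\<forall>p\<in>P. dipath_from_to (climb_arcs x) (climb_sources x) (climb_targets x) p"
  shows "card P + (if x = u then 0 else 1) \<le> est V E \<sigma> r x"
proof -
  let ?F = "Cons x ` P"
  note climb = climb_path_qualifying[OF x(1,2)]
  have F_shortest: "\<forall>p\<in>?F. \<exists>v. qualifying V E \<sigma> r x v p \<and> shortest_qualifying V E \<sigma> (path_len p) x v p"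
    using climb P(3) by blast
  have x_notin: "x \<notin> set p" if "p \<in> P" for p
    using climb(3) P(3) that by blast
  have F_disj: "disjoint_at x ?F"
    unfolding disjoint_at_def
  proof (intro ballI impI)
    fix p q assume "p \<in> ?F" "q \<in> ?F" "p \<noteq> q"
    then obtain p' q' where "p' \<in> P" "q' \<in> P" "p' \<noteq> q'" "p = x # p'" "q = x # q'" by blast
    then show "set p \<inter> set q = {x}" using P(2) unfolding disjoint_family_on_def by auto
  qed
  have card_F: "card ?F = card P" by (simp add: card_image)
  show ?thesis
  proof (cases "x = u")
    case True
    then show ?thesis using card_le_est[OF finite_V F_disj F_shortest] card_F by simp
  next
    case False
    then obtain q where q: "qualifying V E \<sigma> r x (last q) q"
        "shortest_qualifying V E \<sigma> (path_len q) x (last q) q" "\<forall>z\<in>set q. z \<noteq> x \<longrightarrow> depth z < depth x"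
      using descending_qualifying_path x(1,3) x(2) unfolding le_root_def by blast
    have "x \<in> set q" "last q \<in> set q" "last q \<noteq> x"
      using q(1) unfolding qualifying_def is_path_def by auto
    have q_meets: "set q \<inter> set p = {x}" if "p \<in> ?F" for p
      using that q(3) climb(3) P(3) \<open>x \<in> set q\<close> by fastforce
    then have "q \<notin> ?F" using \<open>last q \<in> set q\<close> \<open>last q \<noteq> x\<close> by blast
    have "disjoint_at x (insert q ?F)"
      using F_disj q_meets unfolding disjoint_at_def by (metis Int_commute insert_iff)
    then have "card (insert q ?F) \<le> est V E \<sigma> r x"
      using card_le_est[OF finite_V] F_shortest q(1,2) by blast
    then show ?thesis using \<open>q \<notin> ?F\<close> P(1) card_F False by simp
  qed
qed

lemma small_climb_separator:
  assumes "x \<in> reachable" "le_root x" "depth x \<le> r"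
  obtains C where "finite C" "separates (climb_arcs x) (climb_sources x) (climb_targets x) C"
    "card C + (if x = u then 0 else 1) \<le> est V E \<sigma> r x"
proof -
  let ?d = "if x = u then 0 else 1 :: nat"
  have "\<exists>C. finite C \<and> separates (climb_arcs x) (climb_sources x) (climb_targets x) C
      \<and> card C + ?d \<le> est V E \<sigma> r x"
  proof (rule ccontr)
    assume none: "\<not> ?thesis"
    have large: "Suc (est V E \<sigma> r x) - ?d \<le> card S"
      if "finite S" "separates (climb_arcs x) (climb_sources x) (climb_targets x) S" for S
      using none that by fastforce
    obtain P where "finite P" "card P = Suc (est V E \<sigma> r x) - ?d" "disjoint_family_on set P"
        "\<forall>p\<in>P. dipath_from_to (climb_arcs x) (climb_sources x) (climb_targets x) p"
      using menger[OF finite_climb_arcs large] unfolding disjoint_dipaths_def by blast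
    then show False using climbing_paths_card_le_est[OF assms] by fastforce
  qed
  then show thesis using that by blast
qed

lemma climb_dipathI:
  assumes x: "le_root x" and p: "bfs_walk (x # p)" "p \<noteq> []"
    and "\<forall>z\<in>set (butlast p). \<not> x \<prec> z" "x \<prec> last p" "depth (last p) \<le> r"
  shows "dipath_from_to (climb_arcs x) (climb_sources x) (climb_targets x) p"
proof -
  have distinct: "distinct (x # p)" using bfs_walk_distinct[OF p(1)] .
  have "successively (\<lambda>a b. (a, b) \<in> climb_arcs x) p"
  proof (rule successively_mono_adjacent)
    show "successively bfs_edge p" using p unfolding bfs_walk_def by (auto simp: successively_Cons)
    fix ys a b zs assume "p = ys @ a # b # zs" "bfs_edge a b"
    moreover from this(1) have "a \<in> set (butlast p)" by (simp add: butlast_append)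
    ultimately show "(a, b) \<in> climb_arcs x"
      using assms(4) distinct prec_total[of a x] edge_in_V le_root_in_V[OF x]
      unfolding climb_arcs_def bfs_edge_def by auto
  qed
  moreover have "bfs_edge x (hd p)" using p unfolding bfs_walk_def by (auto simp: successively_Cons)
  ultimately show ?thesis
    using distinct assms(5,6) p(2)
    unfolding dipath_from_to_def dipath_def climb_sources_def climb_targets_def by auto
qed

lemma descendants_cover:
  assumes x: "x \<in> reachable" "le_root x"
    and C: "separates (climb_arcs x) (climb_sources x) (climb_targets x) C"
    and v: "v \<in> descendants x"
  obtains c where "c \<in> C" "c \<in> reachable" "depth x < depth c" "depth c \<le> r" "v \<in> descendants c"
proof -
  obtain w where w: "bfs_walk w" "hd w = x" "last w = v"
    using v unfolding descendants_def by blast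
  have "x \<prec> v"
    using v x(2) prec_trans reach_iff unfolding descendants_def le_root_def by blast
  moreover have "v \<in> set w" using w(1,3) unfolding bfs_walk_def by auto
  ultimately obtain w1 f w2 where split: "w = w1 @ f # w2" "x \<prec> f" "\<forall>z\<in>set w1. \<not> x \<prec> z"
    using split_list_first_prop[of w "\<lambda>z. x \<prec> z"] by blast
  then obtain w1' where w1: "w1 = x # w1'"
    using w(1,2) prec_irrefl unfolding bfs_walk_def by (cases w1) auto
  define p where "p = w1' @ [f]"
  have w_eq: "w = x # p @ w2" unfolding p_def using split(1) w1 by simp
  have "bfs_walk (x # p)" using bfs_walk_split(1)[of "x # w1'" f w2] w(1) split(1) w1
    unfolding p_def by simp
  moreover have "depth f \<le> r"
    using bfs_walk_depth_bounds(2)[OF w(1), of f] descendants_depth(3)[OF v] w(3) split(1) by simp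
  ultimately have "dipath_from_to (climb_arcs x) (climb_sources x) (climb_targets x) p"
    using climb_dipathI[OF x(2)] split(2,3) w1 unfolding p_def by simp
  then obtain c where c: "c \<in> C" "c \<in> set p" using C unfolding separates_def by blast
  then obtain w3 w4 where "w = w3 @ c # w4" using w_eq by (metis in_set_conv_decomp append_Cons append_assoc)
  then have "bfs_walk (c # w4)" "last (c # w4) = v" using bfs_walk_split(2) w(1,3) by auto
  then have "v \<in> descendants c" using v unfolding descendants_def by auto
  moreover have "c \<in> reachable" "depth x < depth c"
    using bfs_walk_reachable[OF w(1)] bfs_walk_depth_bounds(3)[OF w(1)] bfs_walk_distinct[OF w(1)]
      x(1) w(2) c(2) unfolding w_eq by auto
  moreover have "depth c \<le> r" using descendants_depth(1,3)[OF \<open>v \<in> descendants c\<close>] by simp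
  ultimately show thesis using that c(1) by blast
qed

end

section \<open>Weights of reachable vertices\<close>

lemma sum_UN_le:
  fixes f :: "'b \<Rightarrow> nat"
  assumes "finite I" "\<And>i. i \<in> I \<Longrightarrow> finite (A i)"
  shows "sum f (\<Union>i\<in>I. A i) \<le> (\<Sum>i\<in>I. sum f (A i))"
  using assms
proof (induction I rule: finite_induct)
  case (insert j I)
  have "sum f (\<Union>i\<in>insert j I. A i) \<le> sum f (A j) + sum f (\<Union>i\<in>I. A i)"
    using sum.union_inter[of "A j" "\<Union>i\<in>I. A i" f] insert by simp
  also have "\<dots> \<le> sum f (A j) + (\<Sum>i\<in>I. sum f (A i))" using insert by simp
  finally show ?case using insert by simp
qed simp

lemma sum_le_power_Suc:
  fixes f :: "'b \<Rightarrow> nat"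
  assumes "card C < k" "\<And>c. c \<in> C \<Longrightarrow> f c \<le> (k - 1) ^ n"
  shows "sum f C \<le> (k - 1) ^ Suc n"
proof -
  have "sum f C \<le> card C * (k - 1) ^ n" using sum_bounded_above[of C f] assms(2) by simp
  also have "\<dots> \<le> (k - 1) * (k - 1) ^ n" using assms(1) by (intro mult_right_mono) auto
  finally show ?thesis by simp
qed

locale est_bounded_graph = rooted_ordered_graph +
  fixes k :: nat
  assumes est_le: "\<forall>w\<in>V. est V E \<sigma> r w \<le> k"
begin

lemma descendants_small_cover:
  assumes "x \<in> reachable" "le_root x" "depth x \<le> r"
  obtains C where "finite C" "card C + (if x = u then 0 else 1) \<le> k"
    "\<And>c. c \<in> C \<Longrightarrow> c \<in> reachable \<and> depth x < depth c \<and> depth c \<le> r"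
    "descendants x \<subseteq> (\<Union>c\<in>C. descendants c)"
proof -
  obtain S where S: "finite S" "separates (climb_arcs x) (climb_sources x) (climb_targets x) S"
      "card S + (if x = u then 0 else 1) \<le> est V E \<sigma> r x"
    using small_climb_separator[OF assms] by blast
  define C where "C = {c \<in> S. c \<in> reachable \<and> depth x < depth c \<and> depth c \<le> r}"
  have "card C \<le> card S" unfolding C_def using S(1) by (intro card_mono) auto
  moreover have "est V E \<sigma> r x \<le> k" using est_le le_root_in_V[OF assms(2)] by blast
  moreover have "descendants x \<subseteq> (\<Union>c\<in>C. descendants c)"
    using descendants_cover[OF assms(1,2) S(2)] unfolding C_def by blast
  ultimately show thesis using that[of C] S(1,3) unfolding C_def by fastforce
qed

definition weight :: "'a \<Rightarrow> nat" where
  "weight y = (\<Sum>v\<in>descendants y. (k - 1) ^ (r - depth v))"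

lemma weight_mono: "descendants c \<subseteq> descendants y \<Longrightarrow> weight c \<le> weight y"
  unfolding weight_def using finite_descendants by (intro sum_mono2) auto

lemma weight_le_sum_cover:
  assumes "finite C" "descendants x \<subseteq> (\<Union>c\<in>C. descendants c)"
  shows "weight x \<le> (\<Sum>c\<in>C. weight c)"
proof -
  have "weight x \<le> (\<Sum>v\<in>(\<Union>c\<in>C. descendants c). (k - 1) ^ (r - depth v))"
    unfolding weight_def using assms finite_descendants by (intro sum_mono2) auto
  also have "\<dots> \<le> (\<Sum>c\<in>C. weight c)"
    unfolding weight_def using sum_UN_le[OF assms(1)] finite_descendants by blast
  finally show ?thesis .
qed

lemma weight_le_power:
  assumes "y \<in> reachable" "y \<noteq> u"
  shows "weight y \<le> (k - 1) ^ (r - depth y)"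
  using assms
proof (induction "r - depth y" arbitrary: y rule: less_induct)
  case (less y)
  consider "\<not> le_root y" | "le_root y" "r \<le> depth y" | "le_root y" "depth y < r"
    by linarith
  then show ?case
  proof cases
    case 1
    then have "weight y \<le> (\<Sum>v\<in>{y}. (k - 1) ^ (r - depth v))"
      unfolding weight_def using descendants_not_le_root by (intro sum_mono2) auto
    then show ?thesis by simp
  next
    case 2
    then have "descendants y = {}"
      using descendants_before_root_deeper less.prems(2) descendants_depth(3)
      unfolding le_root_def by fastforce
    then show ?thesis unfolding weight_def by simp
  next
    case 3
    obtain C where C: "finite C" "card C + (if y = u then 0 else 1) \<le> k"
        "\<And>c. c \<in> C \<Longrightarrow> c \<in> reachable \<and> depth y < depth c \<and> depth c \<le> r"
        "descendants y \<subseteq> (\<Union>c\<in>C. descendants c)"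
      using descendants_small_cover[OF less.prems(1) 3(1) less_imp_le[OF 3(2)]] by blast
    have card_C: "card C < k" using C(2) less.prems(2) by simp
    have "weight c \<le> (k - 1) ^ (r - depth y - 1)" if "c \<in> C" for c
    proof -
      have "c \<noteq> u" using C(3)[OF that] depth_root by auto
      moreover have "r - depth c < r - depth y" using C(3)[OF that] by auto
      ultimately have "weight c \<le> (k - 1) ^ (r - depth c)"
        using less.hyps[of c] C(3)[OF that] by blast
      also have "\<dots> \<le> (k - 1) ^ (r - depth y - 1)"
      proof (rule power_increasing)
        show "r - depth c \<le> r - depth y - 1" using C(3)[OF that] by auto
        have "0 < card C" using C(1) that card_gt_0_iff by blast
        then show "1 \<le> k - 1" using card_C by simp
      qed
      finally show ?thesis .
    qed
    then have "(\<Sum>c\<in>C. weight c) \<le> (k - 1) ^ Suc (r - depth y - 1)"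
      by (rule sum_le_power_Suc[OF card_C])
    then show ?thesis using weight_le_sum_cover[OF C(1,4)] 3(2) by (simp add: Suc_diff_Suc)
  qed
qed

lemma weight_root_le: "weight u \<le> k * (k - 1) ^ (r - 1)"
proof -
  have "le_root u" "depth u \<le> r" unfolding le_root_def depth_root by simp_all
  then obtain C where C: "finite C" "card C + (if u = u then 0 else 1) \<le> k"
      "\<And>c. c \<in> C \<Longrightarrow> c \<in> reachable \<and> depth u < depth c \<and> depth c \<le> r"
      "descendants u \<subseteq> (\<Union>c\<in>C. descendants c)"
    using descendants_small_cover[OF root_reachable] by blast
  have "weight c \<le> (k - 1) ^ (r - 1)" if "c \<in> C" for c
  proof -
    have "c \<in> reachable" "c \<noteq> u" using C(3)[OF that] depth_root by auto
    then obtain y where "y \<in> reachable" "depth y = 1" "descendants c \<subseteq> descendants y"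
      by (rule depth_one_ancestor)
    then show ?thesis
      using weight_mono weight_le_power[of y] depth_root by (metis le_trans zero_neq_one)
  qed
  then have "(\<Sum>c\<in>C. weight c) \<le> card C * (k - 1) ^ (r - 1)"
    using sum_bounded_above[of C weight] by simp
  also have "\<dots> \<le> k * (k - 1) ^ (r - 1)" using C(2) by (intro mult_right_mono) simp_all
  finally show ?thesis using weight_le_sum_cover[OF C(1,4)] by simp
qed

end

theorem lemma4p5:
  fixes V :: "'a set" and E :: "'a \<Rightarrow> 'a \<Rightarrow> bool" and \<sigma> :: "('a \<times> 'a) set"
    and r k :: nat and u :: 'a
  assumes "simple_graph V E"
    and "r \<ge> 1"
    and "k = adm V E r"
    and "total_order_on V \<sigma>"
    and "\<forall>w \<in> V. est V E \<sigma> r w \<le> k"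
    and "u \<in> V"
  shows "(\<Sum>v \<in> reach V E \<sigma> r u. (k - 1) ^ (r - dist_reach V E \<sigma> u v))
           \<le> k * (k - 1) ^ (r - 1)"
proof -
  interpret est_bounded_graph V E \<sigma> r u k
    using assms(1,4,5,6) by unfold_locales
  have "(\<Sum>v \<in> reach V E \<sigma> r u. (k - 1) ^ (r - dist_reach V E \<sigma> u v)) = weight u"
    unfolding weight_def descendants_root using dist_reach_eq_depth by (intro sum.cong) auto
  then show ?thesis using weight_root_le by simp
qed

end
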